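(* Let $H(\mathbb C)$ be the space of entire functions with the topology of locally uniform convergence, identified with the space of sequences $(x(n))_{n\ge0}$ of Taylor coefficients at $0$ and endowed with the Hadamard (coordinatewise) product, and let $D:f\mapsto f'$ be the differentiation operator, i.e. $D(x(0),x(1),x(2),\ldots)=(x(1),2x(2),3x(3),\ldots)$. If $x$ is a frequently hypercyclic vector for $D$, then there exists a natural number $M$ such that $x^m$ is not hypercyclic for $D$ for any $m\ge M$. In particular, $D$ does not have any frequently hypercyclic algebra.
   Context: A vector $x$ is hypercyclic for $T$ if its orbit $\{T^nx:n\ge0\}$ is dense; frequently hypercyclic if for every non-empty open $U$ the set $\{n\in\mathbb N_0:T^nx\in U\}$ has positive lower density $\liminf_{N\to\infty}\frac{\mathrm{card}(A\cap[0,N])}{N+1}$. Powers $x^m$ are taken for the Hadamard product. A frequently hypercyclic algebra is a subalgebra $\ne\{0\}$ all of whose non-zero elements are frequently hypercyclic. *)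

theory Defs
  imports "HOL-Analysis.Analysis"
begin

text \<open>Entire functions identified with their Taylor coefficient sequences at 0:
  a sequence x is (the coefficient sequence of) an entire function iff its
  power series converges absolutely on every disc.\<close>
definition entire_seqs :: "(nat \<Rightarrow> complex) set" where
  "entire_seqs = {x. \<forall>R::real. summable (\<lambda>n. norm (x n) * R ^ n)}"

definition fun_of_seq :: "(nat \<Rightarrow> complex) \<Rightarrow> complex \<Rightarrow> complex" where
  "fun_of_seq x w = (\<Sum>n. x n * w ^ n)"

definition lu_nbhd :: "(nat \<Rightarrow> complex) \<Rightarrow> real \<Rightarrow> real \<Rightarrow> (nat \<Rightarrow> complex) set" where
  "lu_nbhd y R e = {z \<in> entire_seqs. \<forall>w. cmod w \<le> R \<longrightarrow>
       cmod (fun_of_seq z w - fun_of_seq y w) < e}"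

definition lu_open :: "(nat \<Rightarrow> complex) set \<Rightarrow> bool" where
  "lu_open U \<longleftrightarrow> U \<subseteq> entire_seqs \<and>
     (\<forall>y\<in>U. \<exists>R>0. \<exists>e>0. lu_nbhd y R e \<subseteq> U)"

definition Dop :: "(nat \<Rightarrow> complex) \<Rightarrow> (nat \<Rightarrow> complex)" where
  "Dop x = (\<lambda>n. of_nat (Suc n) * x (Suc n))"

definition hpow :: "(nat \<Rightarrow> complex) \<Rightarrow> nat \<Rightarrow> (nat \<Rightarrow> complex)" where
  "hpow x m = (\<lambda>n. x n ^ m)"

definition lower_density :: "nat set \<Rightarrow> ereal" where
  "lower_density A = liminf (\<lambda>N. ereal (real (card (A \<inter> {0..N})) / real (N + 1)))"

definition hypercyclic_D :: "(nat \<Rightarrow> complex) \<Rightarrow> bool" where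
  "hypercyclic_D x \<longleftrightarrow> x \<in> entire_seqs \<and>
     (\<forall>U. lu_open U \<and> U \<noteq> {} \<longrightarrow> (\<exists>n. (Dop ^^ n) x \<in> U))"

definition freq_hypercyclic_D :: "(nat \<Rightarrow> complex) \<Rightarrow> bool" where
  "freq_hypercyclic_D x \<longleftrightarrow> x \<in> entire_seqs \<and>
     (\<forall>U. lu_open U \<and> U \<noteq> {} \<longrightarrow> lower_density {n. (Dop ^^ n) x \<in> U} > 0)"

definition hadamard_subalgebra :: "(nat \<Rightarrow> complex) set \<Rightarrow> bool" where
  "hadamard_subalgebra A \<longleftrightarrow> A \<subseteq> entire_seqs \<and> (\<lambda>n. 0) \<in> A \<and>
     (\<forall>x\<in>A. \<forall>y\<in>A. (\<lambda>n. x n + y n) \<in> A) \<and>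
     (\<forall>c::complex. \<forall>x\<in>A. (\<lambda>n. c * x n) \<in> A) \<and>
     (\<forall>x\<in>A. \<forall>y\<in>A. (\<lambda>n. x n * y n) \<in> A)"

definition freq_hypercyclic_algebra_D :: "(nat \<Rightarrow> complex) set \<Rightarrow> bool" where
  "freq_hypercyclic_algebra_D A \<longleftrightarrow> hadamard_subalgebra A \<and> A \<noteq> {\<lambda>n. 0} \<and>
     (\<forall>x\<in>A. x \<noteq> (\<lambda>n. 0) \<longrightarrow> freq_hypercyclic_D x)"

end

theory Submission
  imports Defs "HOL-Complex_Analysis.Complex_Analysis"
begin

text \<open>The set of \<open>z\<close> with \<open>|f\<^sub>z| < 1\<close> on the closed unit disc is a
  non-empty open set, so \<open>D\<^sup>n x\<close> lies in it for a set of \<open>n\<close> of lower density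
  \<open>\<delta> > 0\<close>. For such \<open>n\<close> the Cauchy estimates give \<open>|x(n+k)| (n+k)! \<le> k!\<close>.
  For every large \<open>N\<close> there is such an \<open>n \<le> N\<close> with \<open>n > \<delta> N\<close>, which yields
  \<open>|x(N)| \<le> (2/N)\<^sup>t\<close> with \<open>t\<close> a fixed fraction of \<open>N\<close>. Hence for \<open>m\<close> large
  \<open>N! |x(N)|\<^sup>m \<rightarrow> 0\<close>; but \<open>N! x(N)\<^sup>m\<close> is the constant term of \<open>D\<^sup>N (x\<^sup>m)\<close>,
  so the orbit of \<open>x\<^sup>m\<close> stays away from functions with large value at \<open>0\<close>.
  A frequently hypercyclic algebra containing \<open>x \<noteq> 0\<close> would contain the non-zero
  powers \<open>x\<^sup>m\<close>, all of them (frequently) hypercyclic.\<close>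

lemma summable_entire_seqs:
  assumes "z \<in> entire_seqs"
  shows "summable (\<lambda>n. z n * w ^ n)"
proof (rule summable_norm_cancel)
  have "summable (\<lambda>n. norm (z n) * norm w ^ n)"
    using assms by (simp add: entire_seqs_def)
  then show "summable (\<lambda>n. norm (z n * w ^ n))"
    by (simp add: norm_mult norm_power)
qed

lemma norm_coeff_le_Cauchy:
  assumes z: "z \<in> entire_seqs" and "R > 0"
    and bound: "\<And>w. cmod w \<le> R \<Longrightarrow> cmod (fun_of_seq z w) \<le> B"
  shows "cmod (z k) \<le> B / R ^ k"
proof -
  define F where "F = Abs_fps z"
  have radius: "fps_conv_radius F = \<infinity>"
    unfolding fps_conv_radius_def F_def
    by (simp add: conv_radius_inftyI'' summable_entire_seqs[OF z])
  have eval: "eval_fps F = fun_of_seq z"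
    by (simp add: eval_fps_def F_def fun_of_seq_def fun_eq_iff)
  have Cauchy: "norm ((deriv ^^ k) (eval_fps F) 0) \<le> fact k * B / R ^ k"
  proof (rule Cauchy_inequality)
    show "eval_fps F holomorphic_on ball 0 R"
      by (rule holomorphic_on_eval_fps) (simp add: radius)
    show "continuous_on (cball 0 R) (eval_fps F)"
      using continuous_on_eval_fps[of F] radius by (auto intro: continuous_on_subset)
    show "norm (eval_fps F w) \<le> B" if "norm (0 - w) = R" for w
      using bound[of w] that eval by simp
  qed (use \<open>R > 0\<close> in simp)
  have "z k = (deriv ^^ k) (eval_fps F) 0 / fact k"
    using fps_nth_conv_deriv[of F k] radius by (simp add: F_def)
  then have "cmod (z k) = norm ((deriv ^^ k) (eval_fps F) 0) / fact k"
    by (simp add: norm_divide)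
  also have "\<dots> \<le> fact k * B / R ^ k / fact k"
    using Cauchy by (rule divide_right_mono) simp
  finally show ?thesis
    by simp
qed

lemma Dop_funpow_mult_fact:
  "(Dop ^^ n) x k * fact k = fact (n + k) * x (n + k)"
proof (induction n arbitrary: k)
  case 0
  then show ?case by simp
next
  case (Suc n)
  have "(Dop ^^ Suc n) x k * fact k = (Dop ^^ n) x (Suc k) * fact (Suc k)"
    by (simp add: Dop_def algebra_simps)
  also have "\<dots> = fact (Suc n + k) * x (Suc n + k)"
    using Suc[of "Suc k"] by simp
  finally show ?case .
qed

lemma Dop_funpow_coeff_0: "(Dop ^^ n) x 0 = fact n * x n"
  using Dop_funpow_mult_fact[of n x 0] by simp

lemma lu_open_sup_disc_less:
  assumes "R > 0"
  shows "lu_open {z \<in> entire_seqs. \<exists>e>0. \<forall>w. cmod w \<le> R \<longrightarrow> cmod (fun_of_seq z w) < r - e}"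
    (is "lu_open ?U")
  unfolding lu_open_def
proof (intro conjI ballI)
  show "?U \<subseteq> entire_seqs" by auto
  fix y assume "y \<in> ?U"
  then obtain e where "e > 0" and e: "\<And>w. cmod w \<le> R \<Longrightarrow> cmod (fun_of_seq y w) < r - e"
    by auto
  have "lu_nbhd y R (e/2) \<subseteq> ?U"
  proof
    fix z assume z: "z \<in> lu_nbhd y R (e/2)"
    have "cmod (fun_of_seq z w) < r - e/2" if "cmod w \<le> R" for w
    proof -
      have "cmod (fun_of_seq z w - fun_of_seq y w) < e/2"
        using z that by (auto simp: lu_nbhd_def)
      moreover have "cmod (fun_of_seq z w) \<le> cmod (fun_of_seq z w - fun_of_seq y w) + cmod (fun_of_seq y w)"
        by (metis diff_add_cancel norm_triangle_ineq)
      ultimately show ?thesis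
        using e[OF that] by linarith
    qed
    then show "z \<in> ?U"
      using z \<open>e > 0\<close> by (auto simp: lu_nbhd_def intro!: exI[of _ "e/2"])
  qed
  then show "\<exists>R>0. \<exists>e>0. lu_nbhd y R e \<subseteq> ?U"
    using \<open>R > 0\<close> \<open>e > 0\<close> half_gt_zero by blast
qed

lemma lu_open_coeff_0_ball: "lu_open {z \<in> entire_seqs. dist (z 0) c < r}"
  (is "lu_open ?U")
  unfolding lu_open_def
proof (intro conjI ballI)
  show "?U \<subseteq> entire_seqs" by auto
  fix y assume y: "y \<in> ?U"
  have "lu_nbhd y 1 (r - dist (y 0) c) \<subseteq> ?U"
  proof
    fix z assume z: "z \<in> lu_nbhd y 1 (r - dist (y 0) c)"
    then have "dist (z 0) (y 0) < r - dist (y 0) c"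
      by (auto simp: lu_nbhd_def dist_norm fun_of_seq_def dest: spec[of _ 0])
    then show "z \<in> ?U"
      using z dist_triangle[of "z 0" c "y 0"] by (auto simp: lu_nbhd_def)
  qed
  moreover have "r - dist (y 0) c > 0"
    using y by simp
  ultimately show "\<exists>R>0. \<exists>e>0. lu_nbhd y R e \<subseteq> ?U"
    using zero_less_one by blast
qed

lemma not_hypercyclic_D_if_Bseq_coeff_0:
  assumes "Bseq (\<lambda>n. (Dop ^^ n) y 0)"
  shows "\<not> hypercyclic_D y"
proof
  assume hc: "hypercyclic_D y"
  from assms obtain B where B: "\<And>n. cmod ((Dop ^^ n) y 0) \<le> B"
    unfolding Bseq_def by blast
  define c where "c = complex_of_real (B + 1)"
  define U where "U = {z \<in> entire_seqs. dist (z 0) c < 1}"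
  have "(\<lambda>n. if n = 0 then c else 0) \<in> U"
    by (auto simp: U_def entire_seqs_def intro!: summable_finite[of "{0}"] split: if_splits)
  with lu_open_coeff_0_ball[of c 1] hc obtain n where "(Dop ^^ n) y \<in> U"
    unfolding hypercyclic_D_def U_def by blast
  then have "dist ((Dop ^^ n) y 0) c < 1"
    by (simp add: U_def)
  moreover have "cmod c = B + 1"
    using order_trans[OF norm_ge_zero B[of 0]] by (simp add: c_def)
  ultimately show False
    using B[of n] norm_triangle_ineq2[of c "(Dop ^^ n) y 0"]
    by (simp add: dist_norm norm_minus_commute)
qed

lemma freq_hypercyclic_D_imp_hypercyclic_D:
  assumes "freq_hypercyclic_D x"
  shows "hypercyclic_D x"
  unfolding hypercyclic_D_def
proof (intro conjI allI impI)
  show "x \<in> entire_seqs"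
    using assms by (simp add: freq_hypercyclic_D_def)
  fix U assume "lu_open U \<and> U \<noteq> {}"
  then have "lower_density {n. (Dop ^^ n) x \<in> U} > 0"
    using assms by (simp add: freq_hypercyclic_D_def)
  moreover have "lower_density {} = 0"
    by (simp add: lower_density_def zero_ereal_def[symmetric] Liminf_const)
  ultimately show "\<exists>n. (Dop ^^ n) x \<in> U"
    by (metis (no_types, lifting) empty_Collect_eq less_irrefl)
qed

lemma lower_density_pos_imp_large_elements:
  assumes "lower_density A > 0"
  obtains \<delta> N0 where "\<delta> > 0"
    "\<And>N. N \<ge> N0 \<Longrightarrow> \<exists>n\<in>A. n \<le> N \<and> \<delta> * (real N + 1) < real n + 1"
proof -
  obtain \<delta> where "0 < ereal \<delta>" and \<delta>: "ereal \<delta> < lower_density A"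
    using ereal_dense2[OF assms] by blast
  then have "\<delta> > 0"
    by simp
  have "eventually (\<lambda>N. ereal \<delta> < ereal (real (card (A \<inter> {0..N})) / real (N + 1))) sequentially"
    using less_LiminfD[OF \<delta>[unfolded lower_density_def]] .
  then obtain N0 where "\<And>N. N \<ge> N0 \<Longrightarrow> \<delta> < real (card (A \<inter> {0..N})) / real (N + 1)"
    by (auto simp: eventually_sequentially)
  then have N0: "\<And>N. N \<ge> N0 \<Longrightarrow> \<delta> * (real N + 1) < real (card (A \<inter> {0..N}))"
    by (simp add: field_simps)
  have "\<exists>n\<in>A. n \<le> N \<and> \<delta> * (real N + 1) < real n + 1" if "N \<ge> N0" for N
  proof -
    have "A \<inter> {0..N} \<noteq> {}"
      using N0[OF that] \<open>\<delta> > 0\<close> by (auto simp: mult_less_0_iff)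
    define n where "n = Max (A \<inter> {0..N})"
    have n: "n \<in> A \<inter> {0..N}"
      unfolding n_def using \<open>A \<inter> {0..N} \<noteq> {}\<close> by (intro Max_in) auto
    have "A \<inter> {0..N} \<subseteq> {0..n}"
      unfolding n_def by (auto intro: Max_ge)
    then have "card (A \<inter> {0..N}) \<le> n + 1"
      using card_mono[of "{0..n}"] by fastforce
    then show ?thesis
      using n N0[OF that] by force
  qed
  with \<open>\<delta> > 0\<close> show thesis by (rule that)
qed

lemma freq_hypercyclic_D_coeff_estimate:
  assumes "freq_hypercyclic_D x"
  obtains \<delta> N0 where "\<delta> > 0" "\<And>N. N \<ge> N0 \<Longrightarrow>
    \<exists>n\<le>N. \<delta> * (real N + 1) < real n + 1 \<and> cmod (x N) * fact N \<le> fact (N - n)"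
proof -
  define U where
    "U = {z \<in> entire_seqs. \<exists>e>0. \<forall>w. cmod w \<le> 1 \<longrightarrow> cmod (fun_of_seq z w) < 1 - e}"
  have "(\<lambda>n. 0) \<in> U"
    by (auto simp: U_def entire_seqs_def fun_of_seq_def intro!: exI[of _ "1/2"])
  with lu_open_sup_disc_less[OF zero_less_one, of 1] assms
  have "lower_density {n. (Dop ^^ n) x \<in> U} > 0"
    unfolding freq_hypercyclic_D_def U_def by blast
  then obtain \<delta> N0 where "\<delta> > 0" and N0: "\<And>N. N \<ge> N0 \<Longrightarrow>
      \<exists>n\<in>{n. (Dop ^^ n) x \<in> U}. n \<le> N \<and> \<delta> * (real N + 1) < real n + 1"
    using lower_density_pos_imp_large_elements by blast
  have estimate: "cmod (x N) * fact N \<le> fact (N - n)" if "(Dop ^^ n) x \<in> U" "n \<le> N" for n N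
  proof -
    have "cmod ((Dop ^^ n) x (N - n)) \<le> 1 / 1 ^ (N - n)"
      using that(1) by (intro norm_coeff_le_Cauchy[where R = 1]) (auto simp: U_def less_imp_le)
    then have "cmod ((Dop ^^ n) x (N - n) * fact (N - n)) \<le> fact (N - n)"
      by (simp add: norm_mult)
    also have "(Dop ^^ n) x (N - n) * fact (N - n) = fact N * x N"
      using Dop_funpow_mult_fact[of n x "N - n"] that(2) by simp
    finally show ?thesis
      by (simp add: norm_mult mult.commute)
  qed
  show thesis
  proof (rule that[OF \<open>\<delta> > 0\<close>])
    fix N assume "N \<ge> N0"
    with N0 obtain n where "(Dop ^^ n) x \<in> U" "n \<le> N" "\<delta> * (real N + 1) < real n + 1"
      by blast
    with estimate show "\<exists>n\<le>N. \<delta> * (real N + 1) < real n + 1 \<and> cmod (x N) * fact N \<le> fact (N - n)"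
      by blast
  qed
qed

lemma fact_diff_mult_power_le:
  assumes "t \<le> N" "0 \<le> a" "a \<le> real (N - t) + 1"
  shows "fact (N - t) * a ^ t \<le> (fact N :: real)"
  using assms
proof (induction t)
  case 0
  then show ?case by simp
next
  case (Suc t)
  have N_t: "N - t = Suc (N - Suc t)"
    using Suc.prems by simp
  have "fact (N - Suc t) * a ^ Suc t = (fact (N - Suc t) * a) * a ^ t"
    by simp
  also have "\<dots> \<le> (fact (N - Suc t) * real (N - t)) * a ^ t"
    using Suc.prems N_t by (intro mult_right_mono mult_left_mono) auto
  also have "fact (N - Suc t) * real (N - t) = fact (N - t)"
    by (subst (2) N_t) (simp add: N_t algebra_simps)
  also have "fact (N - t) * a ^ t \<le> fact N"
    using Suc.prems by (intro Suc.IH) auto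
  finally show ?case .
qed

lemma le_power_if_mult_fact_le_fact_diff:
  assumes "0 \<le> b" "2 * t \<le> N" "b * fact N \<le> fact (N - t)"
  shows "b \<le> (2 / real N) ^ t"
proof (cases "N = 0")
  case True
  then show ?thesis
    using assms by simp
next
  case False
  have "b * (real N / 2) ^ t * fact N \<le> fact (N - t) * (real N / 2) ^ t"
    using mult_right_mono[OF assms(3), of "(real N / 2) ^ t"] by (simp add: mult_ac)
  also have "\<dots> \<le> fact N"
    using assms(2) by (intro fact_diff_mult_power_le) auto
  finally have "b * (real N / 2) ^ t \<le> 1"
    by simp
  with False show ?thesis
    by (simp add: power_divide field_simps)
qed

lemma fact_mult_power_le_inverse:
  assumes "4 \<le> N" "0 \<le> b" "b \<le> (2 / real N) ^ t" "N + 1 \<le> 2 * e" "4 * e \<le> t * m"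
  shows "fact N * b ^ m \<le> 1 / real N"
proof -
  have N_pos: "real N > 0" and "2 / real N \<le> 1"
    using assms(1) by auto
  have "b ^ m \<le> (2 / real N) ^ (t * m)"
    using assms(2,3) by (simp add: power_mono power_mult)
  also have "\<dots> \<le> (2 / real N) ^ (4 * e)"
    using assms(5) \<open>2 / real N \<le> 1\<close> by (intro power_decreasing) auto
  also have "\<dots> = (4 / real N ^ 2) ^ (2 * e)"
    by (simp add: power_mult power_divide)
  also have "\<dots> \<le> (1 / real N) ^ (2 * e)"
    using assms(1) N_pos by (intro power_mono) (auto simp: field_simps power2_eq_square)
  also have "\<dots> \<le> (1 / real N) ^ (N + 1)"
    using assms(1,4) by (intro power_decreasing) auto
  finally have "fact N * b ^ m \<le> real N ^ N * (1 / real N) ^ (N + 1)"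
    using fact_le_power[of N, where 'a = real] assms(2) by (intro mult_mono) auto
  also have "\<dots> = 1 / real N"
    using N_pos by (simp add: power_one_over field_simps)
  finally show ?thesis .
qed

text \<open>With \<open>q \<ge> 2/\<delta>\<close> and \<open>t = N div q\<close> we get \<open>t < n\<close>, so the factor
  \<open>(N - n)!/N!\<close> is at most \<open>(2/N)\<^sup>t\<close>, and \<open>m \<ge> 4q\<close> makes \<open>tm\<close> exceed \<open>2(N + 1)\<close>.\<close>

lemma fact_mult_power_tendsto_0:
  fixes a :: "nat \<Rightarrow> real"
  assumes "\<delta> > 0" "\<And>N. 0 \<le> a N"
    and large: "\<And>N. N \<ge> N0 \<Longrightarrow> \<exists>n\<le>N. \<delta> * (real N + 1) < real n + 1 \<and> a N * fact N \<le> fact (N - n)"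
  obtains M where "\<And>m. m \<ge> M \<Longrightarrow> (\<lambda>N. fact N * a N ^ m) \<longlonglongrightarrow> 0"
proof
  define q where "q = nat \<lceil>2 / \<delta>\<rceil> + 2"
  have "q \<ge> 2" "real q \<ge> 2 / \<delta>"
    unfolding q_def by linarith+
  then have q_\<delta>: "real q * \<delta> \<ge> 2"
    using \<open>\<delta> > 0\<close> by (simp add: field_simps)
  fix m assume "m \<ge> 4 * q"
  have "fact N * a N ^ m \<le> 1 / real N" if N: "N \<ge> N0 + 2 * q + 4" for N
  proof -
    obtain n where "n \<le> N" and n_large: "\<delta> * (real N + 1) < real n + 1"
      and a_N: "a N * fact N \<le> fact (N - n)"
      using large[of N] N by auto
    define t where "t = N div q"
    have "q * t + N mod q = N" "N mod q < q"
      using \<open>q \<ge> 2\<close> unfolding t_def by simp_all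
    then have "q * t \<le> N" "N < q * t + q"
      by linarith+
    have "2 * (real N + 1) \<le> real q * \<delta> * (real N + 1)"
      using q_\<delta> by (intro mult_right_mono) auto
    also have "\<dots> < real q * (real n + 1)"
      using n_large \<open>q \<ge> 2\<close> by (simp add: mult.assoc)
    finally have "real N < real q * real n"
      using N by (simp add: algebra_simps)
    then have "q * t < q * n"
      using \<open>q * t \<le> N\<close> by (simp only: of_nat_mult[symmetric] of_nat_less_iff)
    then have "t < n"
      by simp
    have "2 * t \<le> N"
      using \<open>q * t \<le> N\<close> \<open>q \<ge> 2\<close> by (meson le_trans mult_le_mono1)
    have "t \<ge> 1"
      using N \<open>N < q * t + q\<close> by (cases t) auto
    have "(fact (N - n) :: real) \<le> fact (N - t)"
      using \<open>t < n\<close> by (intro fact_mono) simp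
    with a_N have "a N * fact N \<le> fact (N - t)"
      by linarith
    then have "a N \<le> (2 / real N) ^ t"
      by (rule le_power_if_mult_fact_le_fact_diff[OF assms(2) \<open>2 * t \<le> N\<close>])
    moreover have "N + 1 \<le> 2 * (q * t)"
      using \<open>N < q * t + q\<close> mult_le_mono2[OF \<open>t \<ge> 1\<close>, of q] by linarith
    moreover have "4 * (q * t) \<le> t * m"
      using \<open>m \<ge> 4 * q\<close> by (simp add: mult.commute)
    ultimately show ?thesis
      using N assms(2) by (intro fact_mult_power_le_inverse) auto
  qed
  then show "(\<lambda>N. fact N * a N ^ m) \<longlonglongrightarrow> 0"
    by (intro tendsto_sandwich[OF _ _ tendsto_const lim_1_over_n])
      (auto simp: eventually_sequentially assms(2) intro!: exI[of _ "N0 + 2 * q + 4"])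
qed

lemma freq_hypercyclic_D_hpow_not_hypercyclic:
  assumes "freq_hypercyclic_D x"
  shows "\<exists>M. \<forall>m\<ge>M. \<not> hypercyclic_D (hpow x m)"
proof -
  obtain \<delta> N0 where "\<delta> > 0" and large: "\<And>N. N \<ge> N0 \<Longrightarrow>
      \<exists>n\<le>N. \<delta> * (real N + 1) < real n + 1 \<and> cmod (x N) * fact N \<le> fact (N - n)"
    using freq_hypercyclic_D_coeff_estimate[OF assms] by blast
  obtain M where M: "\<And>m. m \<ge> M \<Longrightarrow> (\<lambda>N. fact N * cmod (x N) ^ m) \<longlonglongrightarrow> 0"
    using fact_mult_power_tendsto_0[OF \<open>\<delta> > 0\<close> norm_ge_zero large] by blast
  have "\<not> hypercyclic_D (hpow x m)" if "m \<ge> M" for m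
  proof (rule not_hypercyclic_D_if_Bseq_coeff_0)
    have "Bseq (\<lambda>N. fact N * cmod (x N) ^ m)"
      using M[OF that] by (intro convergent_imp_Bseq convergentI)
    then show "Bseq (\<lambda>n. (Dop ^^ n) (hpow x m) 0)"
      by (simp add: Bseq_def Dop_funpow_coeff_0 hpow_def norm_mult norm_power)
  qed
  then show ?thesis by blast
qed

lemma hpow_mem_hadamard_subalgebra:
  assumes "hadamard_subalgebra A" "x \<in> A" "m \<ge> 1"
  shows "hpow x m \<in> A"
  using assms(3)
proof (induction m rule: dec_induct)
  case base
  then show ?case
    using assms(2) by (simp add: hpow_def)
next
  case (step m)
  have "(\<lambda>n. x n * hpow x m n) \<in> A"
    using assms(1,2) step.IH unfolding hadamard_subalgebra_def by blast
  then show ?case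
    by (simp add: hpow_def)
qed

theorem proposition3p1:
  shows "(\<forall>x. freq_hypercyclic_D x \<longrightarrow> (\<exists>M::nat. \<forall>m\<ge>M. \<not> hypercyclic_D (hpow x m)))
         \<and> \<not> (\<exists>A. freq_hypercyclic_algebra_D A)"
proof (intro conjI allI impI notI)
  show "\<exists>M. \<forall>m\<ge>M. \<not> hypercyclic_D (hpow x m)" if "freq_hypercyclic_D x" for x
    using that by (rule freq_hypercyclic_D_hpow_not_hypercyclic)
  assume "\<exists>A. freq_hypercyclic_algebra_D A"
  then obtain A where A: "hadamard_subalgebra A" "A \<noteq> {\<lambda>n. 0}"
    and fhc: "\<And>x. x \<in> A \<Longrightarrow> x \<noteq> (\<lambda>n. 0) \<Longrightarrow> freq_hypercyclic_D x"
    unfolding freq_hypercyclic_algebra_D_def by blast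
  then obtain x where x: "x \<in> A" "x \<noteq> (\<lambda>n. 0)"
    by (auto simp: hadamard_subalgebra_def)
  then obtain M where M: "\<And>m. m \<ge> M \<Longrightarrow> \<not> hypercyclic_D (hpow x m)"
    using freq_hypercyclic_D_hpow_not_hypercyclic[OF fhc] by blast
  define m where "m = max M 1"
  have "hpow x m \<in> A"
    using hpow_mem_hadamard_subalgebra[OF A(1) x(1)] by (simp add: m_def)
  moreover have "hpow x m \<noteq> (\<lambda>n. 0)"
    using x(2) by (auto simp: hpow_def fun_eq_iff m_def)
  ultimately have "hypercyclic_D (hpow x m)"
    using fhc freq_hypercyclic_D_imp_hypercyclic_D by blast
  with M[of m] show False
    by (simp add: m_def)
qed

end
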